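(* Let $n\ge 1$ and let $\varphi(x)$ be any finite Boolean combination of polynomial equations $t(x)=0$ and inequations $u(x)\neq 0$, with $t,u\in\mathbb{C}[x_1,\dots,x_n]$, in the variables $x\in\mathbb{C}^n$. Then there exist polynomials $p,q\in\mathbb{C}[a,b,x_1,\dots,x_n]$ (with $a,b$ single scalar variables) such that for all $x\in\mathbb{C}^n$: $$\varphi(x)\iff(\exists a\in\mathbb{C})(\forall b\in\mathbb{C})\;p(a,b,x)=0,$$ $$\varphi(x)\iff(\forall a\in\mathbb{C})(\exists b\in\mathbb{C})\;q(a,b,x)=0.$$
   Context: A Boolean combination of polynomial equations and inequations is a formula built from atomic formulas of the form $t(x)=0$ and $u(x)\neq 0$ (with $t,u$ polynomials in $x=(x_1,\dots,x_n)$) using finitely many applications of $\wedge,\vee,\neg$. *)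

theory Defs
  imports Complex_Main
begin

text \<open>Multivariate polynomials over the complex numbers, represented as
  polynomial expressions in the variables X 0, X 1, ... .  Since the
  statement only concerns the polynomial functions they define (and over
  the infinite field of complex numbers polynomials and polynomial functions
  coincide), this is a faithful rendering of C[x_1,...,x_n].\<close>

datatype mpoly = Var nat | Const complex | Add mpoly mpoly | Mul mpoly mpoly

fun peval :: "mpoly \<Rightarrow> complex list \<Rightarrow> complex" where
  "peval (Var i) xs = xs ! i"
| "peval (Const c) xs = c"
| "peval (Add p q) xs = peval p xs + peval q xs"
| "peval (Mul p q) xs = peval p xs * peval q xs"

fun pvars :: "mpoly \<Rightarrow> nat set" where
  "pvars (Var i) = {i}"
| "pvars (Const c) = {}"
| "pvars (Add p q) = pvars p \<union> pvars q"
| "pvars (Mul p q) = pvars p \<union> pvars q"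

datatype fm = Eq0 mpoly | Neq0 mpoly | FAnd fm fm | FOr fm fm | FNot fm

fun holds :: "fm \<Rightarrow> complex list \<Rightarrow> bool" where
  "holds (Eq0 t) xs = (peval t xs = 0)"
| "holds (Neq0 u) xs = (peval u xs \<noteq> 0)"
| "holds (FAnd f g) xs = (holds f xs \<and> holds g xs)"
| "holds (FOr f g) xs = (holds f xs \<or> holds g xs)"
| "holds (FNot f) xs = (\<not> holds f xs)"

fun fvars :: "fm \<Rightarrow> nat set" where
  "fvars (Eq0 t) = pvars t"
| "fvars (Neq0 u) = pvars u"
| "fvars (FAnd f g) = fvars f \<union> fvars g"
| "fvars (FOr f g) = fvars f \<union> fvars g"
| "fvars (FNot f) = fvars f"

end

theory Submission
  imports Defs "HOL-Computational_Algebra.Fundamental_Theorem_Algebra"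
begin

text \<open>Bring \<phi> into disjunctive normal form, a disjunction of clauses
  t1 = 0 \<and> ... \<and> tk = 0 \<and> u \<noteq> 0.  For fixed a, the conditions
  \<forall>b. f(a,b,x) = 0 are closed under conjunction, via f(a,b^2,x) + b g(a,b^2,x)
  (even and odd part in b), and under disjunction, via f g, because \<complex>[b] is an
  integral domain.  So a clause is equivalent to \<exists>a \<forall>b of the conjunction of
  a u - 1 and the ti, and the whole disjunction to \<exists>a \<forall>b of the product of
  these polynomials.  For the \<forall>a \<exists>b form apply this to \<not>\<phi>, obtaining p', and
  note that b p'(a,b,x) - 1 has a root b unless p'(a,-,x) vanishes identically,
  by the fundamental theorem of algebra.\<close>

type_synonym clause = "mpoly list \<times> mpoly"

definition clause_holds :: "clause \<Rightarrow> complex list \<Rightarrow> bool" where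
  "clause_holds c xs \<longleftrightarrow> (\<forall>t\<in>set (fst c). peval t xs = 0) \<and> peval (snd c) xs \<noteq> 0"

definition dnf_holds :: "clause list \<Rightarrow> complex list \<Rightarrow> bool" where
  "dnf_holds L xs \<longleftrightarrow> (\<exists>c\<in>set L. clause_holds c xs)"

definition clause_vars :: "clause \<Rightarrow> nat set" where
  "clause_vars c = \<Union>(pvars ` set (fst c)) \<union> pvars (snd c)"

definition dnf_vars :: "clause list \<Rightarrow> nat set" where
  "dnf_vars L = \<Union>(clause_vars ` set L)"

definition dnf_and :: "clause list \<Rightarrow> clause list \<Rightarrow> clause list" where
  "dnf_and L M = [(fst c @ fst d, Mul (snd c) (snd d)). c \<leftarrow> L, d \<leftarrow> M]"

lemma dnf_holds_and: "dnf_holds (dnf_and L M) xs \<longleftrightarrow> dnf_holds L xs \<and> dnf_holds M xs"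
  by (auto simp: dnf_and_def dnf_holds_def clause_holds_def)

lemma dnf_vars_and: "dnf_vars (dnf_and L M) \<subseteq> dnf_vars L \<union> dnf_vars M"
  by (auto simp: dnf_and_def dnf_vars_def clause_vars_def)

definition clause_not :: "clause \<Rightarrow> clause list" where
  "clause_not c = ([snd c], Const 1) # [([], t). t \<leftarrow> fst c]"

lemma dnf_holds_clause_not: "dnf_holds (clause_not c) xs \<longleftrightarrow> \<not> clause_holds c xs"
  by (auto simp: clause_not_def dnf_holds_def clause_holds_def)

lemma dnf_vars_clause_not: "dnf_vars (clause_not c) = clause_vars c"
  by (auto simp: clause_not_def dnf_vars_def clause_vars_def)

fun dnf_not :: "clause list \<Rightarrow> clause list" where
  "dnf_not [] = [([], Const 1)]"
| "dnf_not (c # L) = dnf_and (clause_not c) (dnf_not L)"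

lemma dnf_holds_not: "dnf_holds (dnf_not L) xs \<longleftrightarrow> \<not> dnf_holds L xs"
  by (induction L) (auto simp: dnf_holds_and dnf_holds_clause_not, auto simp: dnf_holds_def clause_holds_def)

lemma dnf_vars_not: "dnf_vars (dnf_not L) \<subseteq> dnf_vars L"
proof (induction L)
  case (Cons c L)
  have "dnf_vars (dnf_not (c # L)) \<subseteq> clause_vars c \<union> dnf_vars (dnf_not L)"
    using dnf_vars_and[of "clause_not c" "dnf_not L"] by (simp add: dnf_vars_clause_not)
  also have "\<dots> \<subseteq> dnf_vars (c # L)"
    using Cons.IH by (auto simp: dnf_vars_def)
  finally show ?case .
qed (simp add: dnf_vars_def clause_vars_def)

fun dnf_of :: "fm \<Rightarrow> clause list" where
  "dnf_of (Eq0 t) = [([t], Const 1)]"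
| "dnf_of (Neq0 u) = [([], u)]"
| "dnf_of (FAnd f g) = dnf_and (dnf_of f) (dnf_of g)"
| "dnf_of (FOr f g) = dnf_of f @ dnf_of g"
| "dnf_of (FNot f) = dnf_not (dnf_of f)"

lemma dnf_holds_dnf_of: "dnf_holds (dnf_of \<phi>) xs \<longleftrightarrow> holds \<phi> xs"
  by (induction \<phi>) (auto simp: dnf_holds_and dnf_holds_not, auto simp: dnf_holds_def clause_holds_def)

lemma dnf_vars_dnf_of: "dnf_vars (dnf_of \<phi>) \<subseteq> fvars \<phi>"
proof (induction \<phi>)
  case (FAnd f g)
  then show ?case using dnf_vars_and[of "dnf_of f" "dnf_of g"] by auto
next
  case (FNot f)
  then show ?case using dnf_vars_not[of "dnf_of f"] by auto
next
  case (FOr f g)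
  then show ?case by (auto simp: dnf_vars_def)
qed (auto simp: dnf_vars_def clause_vars_def)

fun poly_in_b :: "mpoly \<Rightarrow> complex \<Rightarrow> complex list \<Rightarrow> complex poly" where
  "poly_in_b (Var i) a xs = (if i = 0 then [:a:] else if i = 1 then [:0, 1:] else [:xs ! (i - 2):])"
| "poly_in_b (Const c) a xs = [:c:]"
| "poly_in_b (Add p q) a xs = poly_in_b p a xs + poly_in_b q a xs"
| "poly_in_b (Mul p q) a xs = poly_in_b p a xs * poly_in_b q a xs"

lemma poly_poly_in_b: "poly (poly_in_b p a xs) b = peval p (a # b # xs)"
proof (induction p)
  case (Var i)
  then show ?case by (cases i; cases "i - 1"; auto)
qed auto

definition vanishes_in_b :: "mpoly \<Rightarrow> complex \<Rightarrow> complex list \<Rightarrow> bool" where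
  "vanishes_in_b p a xs \<longleftrightarrow> (\<forall>b. peval p (a # b # xs) = 0)"

lemma vanishes_in_b_iff_poly_in_b_eq_0: "vanishes_in_b p a xs \<longleftrightarrow> poly_in_b p a xs = 0"
  by (metis vanishes_in_b_def poly_poly_in_b poly_all_0_iff_0)

lemma vanishes_in_b_Mul:
  "vanishes_in_b (Mul p q) a xs \<longleftrightarrow> vanishes_in_b p a xs \<or> vanishes_in_b q a xs"
  by (simp add: vanishes_in_b_iff_poly_in_b_eq_0)

fun subst_sq :: "mpoly \<Rightarrow> mpoly" where
  "subst_sq (Var i) = (if i = 1 then Mul (Var 1) (Var 1) else Var i)"
| "subst_sq (Const c) = Const c"
| "subst_sq (Add p q) = Add (subst_sq p) (subst_sq q)"
| "subst_sq (Mul p q) = Mul (subst_sq p) (subst_sq q)"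

lemma peval_subst_sq: "peval (subst_sq p) (a # b # xs) = peval p (a # b^2 # xs)"
proof (induction p)
  case (Var i)
  then show ?case by (cases i; cases "i - 1"; auto simp: power2_eq_square)
qed auto

lemma pvars_subst_sq: "pvars (subst_sq p) \<subseteq> insert 1 (pvars p)"
  by (induction p) auto

lemma vanishes_in_b_subst_sq: "vanishes_in_b (subst_sq p) a xs \<longleftrightarrow> vanishes_in_b p a xs"
  unfolding vanishes_in_b_def peval_subst_sq by (metis power2_csqrt)

definition and_in_b :: "mpoly \<Rightarrow> mpoly \<Rightarrow> mpoly" where
  "and_in_b p q = Add (subst_sq p) (Mul (Var 1) (subst_sq q))"

lemma vanishes_in_b_and:
  "vanishes_in_b (and_in_b p q) a xs \<longleftrightarrow> vanishes_in_b p a xs \<and> vanishes_in_b q a xs"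
proof
  assume "vanishes_in_b (and_in_b p q) a xs"
  then have sum: "peval (subst_sq p) (a # b # xs) + b * peval (subst_sq q) (a # b # xs) = 0" for b
    by (simp add: vanishes_in_b_def and_in_b_def)
  have even: "peval (subst_sq r) (a # - b # xs) = peval (subst_sq r) (a # b # xs)" for r b
    by (simp add: peval_subst_sq)
  have "peval (subst_sq p) (a # b # xs) = 0 \<and> b * peval (subst_sq q) (a # b # xs) = 0" for b
    using sum[of b] sum[of "- b"] by (simp add: even)
  then have "vanishes_in_b (subst_sq p) a xs" "vanishes_in_b (Mul (Var 1) (subst_sq q)) a xs"
    by (simp_all add: vanishes_in_b_def)
  moreover have "\<not> vanishes_in_b (Var 1) a xs"
    by (auto simp: vanishes_in_b_def intro: exI[of _ 1])
  ultimately show "vanishes_in_b p a xs \<and> vanishes_in_b q a xs"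
    by (simp add: vanishes_in_b_Mul vanishes_in_b_subst_sq)
next
  assume "vanishes_in_b p a xs \<and> vanishes_in_b q a xs"
  then show "vanishes_in_b (and_in_b p q) a xs"
    by (simp add: vanishes_in_b_def and_in_b_def peval_subst_sq)
qed

lemma pvars_and_in_b: "pvars (and_in_b p q) \<subseteq> insert 1 (pvars p \<union> pvars q)"
  using pvars_subst_sq[of p] pvars_subst_sq[of q] by (auto simp: and_in_b_def)

fun and_all_in_b :: "mpoly list \<Rightarrow> mpoly" where
  "and_all_in_b [] = Const 0"
| "and_all_in_b (p # ps) = and_in_b p (and_all_in_b ps)"

lemma vanishes_in_b_and_all:
  "vanishes_in_b (and_all_in_b ps) a xs \<longleftrightarrow> (\<forall>p\<in>set ps. vanishes_in_b p a xs)"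
  by (induction ps) (auto simp: vanishes_in_b_and, simp add: vanishes_in_b_def)

lemma pvars_and_all_in_b: "pvars (and_all_in_b ps) \<subseteq> insert 1 (\<Union>(pvars ` set ps))"
  by (induction ps) (use pvars_and_in_b in fastforce)+

fun mprod :: "mpoly list \<Rightarrow> mpoly" where
  "mprod [] = Const 1"
| "mprod (p # ps) = Mul p (mprod ps)"

lemma vanishes_in_b_mprod:
  "vanishes_in_b (mprod ps) a xs \<longleftrightarrow> (\<exists>p\<in>set ps. vanishes_in_b p a xs)"
  by (induction ps) (auto simp: vanishes_in_b_Mul, simp add: vanishes_in_b_def)

lemma pvars_mprod: "pvars (mprod ps) = \<Union>(pvars ` set ps)"
  by (induction ps) auto

definition recip :: "nat \<Rightarrow> mpoly \<Rightarrow> mpoly" where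
  "recip i p = Add (Mul (Var i) p) (Const (-1))"

lemma peval_recip_eq_0: "peval (recip i p) xs = 0 \<longleftrightarrow> xs ! i * peval p xs = 1"
  by (simp add: recip_def)

lemma pvars_recip: "pvars (recip i p) = insert i (pvars p)"
  by (simp add: recip_def)

lemma ex_root_recip_in_b: "(\<exists>b. peval (recip 1 p) (a # b # xs) = 0) \<longleftrightarrow> \<not> vanishes_in_b p a xs"
proof
  assume "\<exists>b. peval (recip 1 p) (a # b # xs) = 0"
  then obtain b where "b * peval p (a # b # xs) = 1"
    by (auto simp: peval_recip_eq_0)
  then show "\<not> vanishes_in_b p a xs"
    by (metis vanishes_in_b_def mult_zero_right zero_neq_one)
next
  assume "\<not> vanishes_in_b p a xs"
  then have "poly_in_b p a xs \<noteq> 0"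
    by (simp add: vanishes_in_b_iff_poly_in_b_eq_0)
  then obtain b where "poly (pCons (-1) (poly_in_b p a xs)) b = 0"
    using fundamental_theorem_of_algebra_alt by (metis pCons_eq_iff)
  then show "\<exists>b. peval (recip 1 p) (a # b # xs) = 0"
    by (auto simp: recip_def poly_poly_in_b)
qed

fun shift :: "mpoly \<Rightarrow> mpoly" where
  "shift (Var i) = Var (i + 2)"
| "shift (Const c) = Const c"
| "shift (Add p q) = Add (shift p) (shift q)"
| "shift (Mul p q) = Mul (shift p) (shift q)"

lemma peval_shift: "peval (shift p) (a # b # xs) = peval p xs"
  by (induction p) auto

lemma pvars_shift: "pvars (shift p) = (\<lambda>i. i + 2) ` pvars p"
  by (induction p) auto

definition clause_poly :: "clause \<Rightarrow> mpoly" where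
  "clause_poly c = and_all_in_b (recip 0 (shift (snd c)) # map shift (fst c))"

lemma ex_vanishes_in_b_clause_poly:
  "(\<exists>a. vanishes_in_b (clause_poly c) a xs) \<longleftrightarrow> clause_holds c xs"
proof -
  have "vanishes_in_b (clause_poly c) a xs \<longleftrightarrow>
      a * peval (snd c) xs = 1 \<and> (\<forall>t\<in>set (fst c). peval t xs = 0)" for a
    unfolding clause_poly_def vanishes_in_b_and_all
    by (simp add: vanishes_in_b_def peval_recip_eq_0 peval_shift)
  then show ?thesis
    by (metis clause_holds_def mult_not_zero zero_neq_one field_class.field_inverse mult.commute)
qed

lemma pvars_clause_poly: "pvars (clause_poly c) \<subseteq> {0, 1} \<union> (\<lambda>i. i + 2) ` clause_vars c"
  using pvars_and_all_in_b[of "recip 0 (shift (snd c)) # map shift (fst c)"]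
  by (auto simp: clause_poly_def clause_vars_def pvars_recip pvars_shift)

definition dnf_poly :: "clause list \<Rightarrow> mpoly" where
  "dnf_poly L = mprod (map clause_poly L)"

lemma ex_vanishes_in_b_dnf_poly: "(\<exists>a. vanishes_in_b (dnf_poly L) a xs) \<longleftrightarrow> dnf_holds L xs"
  by (auto simp: dnf_poly_def vanishes_in_b_mprod dnf_holds_def
      simp flip: ex_vanishes_in_b_clause_poly)

lemma pvars_dnf_poly: "pvars (dnf_poly L) \<subseteq> {0, 1} \<union> (\<lambda>i. i + 2) ` dnf_vars L"
  using pvars_clause_poly by (fastforce simp: dnf_poly_def pvars_mprod dnf_vars_def)

theorem theorem1p1:
  fixes n :: nat and \<phi> :: fm
  assumes "n \<ge> 1"
    and "fvars \<phi> \<subseteq> {..<n}"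
  shows "\<exists>p q. pvars p \<subseteq> {..<n+2} \<and> pvars q \<subseteq> {..<n+2} \<and>
    (\<forall>xs. length xs = n \<longrightarrow>
       (holds \<phi> xs \<longleftrightarrow> (\<exists>a. \<forall>b. peval p (a # b # xs) = 0)) \<and>
       (holds \<phi> xs \<longleftrightarrow> (\<forall>a. \<exists>b. peval q (a # b # xs) = 0)))"
proof -
  define p where "p = dnf_poly (dnf_of \<phi>)"
  define p' where "p' = dnf_poly (dnf_of (FNot \<phi>))"
  define q where "q = recip 1 p'"
  have bound: "pvars (dnf_poly (dnf_of \<psi>)) \<subseteq> {..<n+2}" if "fvars \<psi> \<subseteq> {..<n}" for \<psi>
    using pvars_dnf_poly[of "dnf_of \<psi>"] dnf_vars_dnf_of[of \<psi>] that by fastforce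
  have "pvars p \<subseteq> {..<n+2}"
    unfolding p_def using bound assms(2) .
  moreover have "pvars q \<subseteq> {..<n+2}"
    unfolding q_def p'_def pvars_recip using bound[of "FNot \<phi>"] assms(2) by simp
  moreover have "holds \<phi> xs \<longleftrightarrow> (\<exists>a. \<forall>b. peval p (a # b # xs) = 0)" for xs
    using ex_vanishes_in_b_dnf_poly[of "dnf_of \<phi>" xs]
    by (simp add: p_def dnf_holds_dnf_of vanishes_in_b_def)
  moreover have "holds \<phi> xs \<longleftrightarrow> (\<forall>a. \<exists>b. peval q (a # b # xs) = 0)" for xs
  proof -
    have "\<not> holds \<phi> xs \<longleftrightarrow> (\<exists>a. vanishes_in_b p' a xs)"
      by (simp add: p'_def ex_vanishes_in_b_dnf_poly dnf_holds_not dnf_holds_dnf_of)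
    then show ?thesis
      unfolding q_def ex_root_recip_in_b by blast
  qed
  ultimately show ?thesis by blast
qed

end
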